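(* Let $T:[e,+\infty)\to[0,+\infty)$ be a non-decreasing continuous function such that $$\sigma_2^{\log}:=\limsup_{r\to+\infty}\frac{\log^+\log^+T(r)}{\log\log r}<1,$$ and let $\delta\in(0,1-\sigma_2^{\log})$. Then $$T(r\log r)=T(r)+o\!\left(\frac{T(r)}{(\log r)^{\delta}}\right)$$ as $r\to\infty$ outside a set $F\subset[e,\infty)$ satisfying $\int_{F\cap[e,+\infty)}\frac{dt}{t\log t}<+\infty$.
   Context: $\log^+A=\max\{0,\log A\}$ for $A\ge 0$. *)

theory Defs
  imports "HOL-Analysis.Analysis" "HOL-Library.Landau_Symbols"
begin

definition logplus :: "real \<Rightarrow> real" where
  "logplus A = max 0 (ln A)"

end

theory Submission
  imports Defs "HOL-Real_Asymp.Real_Asymp"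
begin

text \<open>
  Let R_0 = e^2 and R_(j+1) = R_j log R_j, so that r |-> r log r maps the cell [R_j, R_(j+1)]
  into [R_j, R_(j+2)], and write L_j = log R_j. Fix sigma above the logarithmic order and
  d in (delta, 1 - sigma), and call the step j exceptional if T(R_(j+2)) > T(R_j) (1 + L_j^(-d)).
  On a non-exceptional cell, monotonicity gives
  T(r log r) - T(r) <= T(r) (log r / 2)^(-d) = o(T(r) / (log r)^delta).

  For any a < 1, a cell has measure log (1 + log L_j / L_j) <= L_j^(-a) / (1 - a) for
  dt / (t log t). On an exceptional step V = log T grows by at least L_j^(-d) / 2, while
  V(R_j) = O(L_j^sigma); by the mean value theorem -V^(-p) then grows by a fixed multiple of
  L_j^(-a), where a = sigma (p + 1) + d < 1 for small p > 0. Since -V^(-p) is bounded, these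
  increments telescope, so the exceptional cells have finite total measure.
\<close>

text \<open>log_orbit j is L_j, since exp (L + ln L) = L exp L.\<close>

fun log_orbit :: "nat \<Rightarrow> real" where
  "log_orbit 0 = 2"
| "log_orbit (Suc j) = log_orbit j + ln (log_orbit j)"

lemma log_orbit_ge_2: "2 \<le> log_orbit j"
  by (induction j) (auto intro: add_increasing2)

lemma log_orbit_ge_linear: "2 + real j * ln 2 \<le> log_orbit j"
proof (induction j)
  case (Suc j)
  have "ln 2 \<le> ln (log_orbit j)" using log_orbit_ge_2[of j] by simp
  with Suc show ?case by (simp add: algebra_simps)
qed simp

lemma log_orbit_less_Suc: "log_orbit j < log_orbit (Suc j)"
  using log_orbit_ge_2[of j] by simp

lemma log_orbit_Suc_le_double: "log_orbit (Suc j) \<le> 2 * log_orbit j"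
proof -
  have "ln (log_orbit j) < log_orbit j" using log_orbit_ge_2[of j] by (intro ln_less_self) simp
  then show ?thesis by simp
qed

declare log_orbit.simps(2) [simp del]

lemma strict_mono_log_orbit: "strict_mono log_orbit"
  by (rule strict_monoI_Suc) (rule log_orbit_less_Suc)

lemma log_orbit_mono: "i \<le> k \<Longrightarrow> log_orbit i \<le> log_orbit k"
  using strict_mono_log_orbit by (simp add: strict_mono_less_eq)

lemma log_orbit_unbounded: "\<exists>j. x \<le> log_orbit j"
proof -
  obtain n :: nat where "x / ln 2 \<le> real n" using real_arch_simple by blast
  then have "x \<le> real n * ln 2" by (simp add: field_simps)
  then show ?thesis using log_orbit_ge_linear[of n] by (intro exI[of _ n]) simp
qed

lemma filterlim_exp_log_orbit: "filterlim (\<lambda>j. exp (log_orbit j)) at_top sequentially"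
proof (rule filterlim_compose[OF exp_at_top])
  show "filterlim log_orbit at_top sequentially"
    unfolding filterlim_at_top eventually_sequentially
    by (metis log_orbit_unbounded log_orbit_mono order.trans)
qed

lemma log_orbit_interval:
  assumes "2 \<le> x"
  obtains j where "log_orbit j \<le> x" "x < log_orbit (Suc j)"
proof -
  obtain k where k: "x < log_orbit k"
    using log_orbit_unbounded[of "x + 1"] by (meson less_add_one order_less_le_trans)
  define m where "m = (LEAST k. x < log_orbit k)"
  have m: "x < log_orbit m" unfolding m_def by (rule LeastI[of _ k]) (rule k)
  then obtain j where j: "m = Suc j" using assms by (cases m) auto
  have "\<not> x < log_orbit j" using j not_less_Least[of j "\<lambda>k. x < log_orbit k"] by (auto simp: m_def)
  with m j show ?thesis by (intro that) auto
qed

lemma exp_log_orbit_cell: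
  assumes "exp (log_orbit J) < r"
  obtains j where "J \<le> j" "exp (log_orbit j) \<le> r" "r \<le> exp (log_orbit (Suc j))"
proof -
  have "0 < r" using assms exp_gt_zero order.strict_trans by blast
  then have "log_orbit J < ln r" using assms by (metis exp_less_cancel_iff exp_ln)
  then obtain j where j: "log_orbit j \<le> ln r" "ln r < log_orbit (Suc j)"
    using log_orbit_interval[of "ln r"] log_orbit_ge_2[of J] by force
  have "J \<le> j" using j \<open>log_orbit J < ln r\<close> log_orbit_mono[of "Suc j" J] by (cases "J \<le> j") auto
  moreover have "exp (log_orbit j) \<le> r" "r \<le> exp (log_orbit (Suc j))"
    using j \<open>0 < r\<close> by (simp add: ln_ge_iff, metis exp_le_cancel_iff exp_ln less_imp_le)
  ultimately show ?thesis by (rule that)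
qed

lemma ln_ratio_ge_half:
  fixes x y e :: real
  assumes "0 < x" "0 \<le> e" "e \<le> 1" "x * (1 + e) \<le> y"
  shows "e / 2 \<le> ln y - ln x"
proof -
  have "1 - 1 / (1 + e) \<le> ln (1 + e)"
    using ln_le_minus_one[of "1 / (1 + e)"] assms by (simp add: ln_div)
  moreover have "e * e \<le> e" using assms by (simp add: mult_left_le)
  then have "e / 2 \<le> 1 - 1 / (1 + e)" using assms by (simp add: field_simps)
  moreover have "ln (x * (1 + e)) \<le> ln y" using assms by (intro ln_mono) auto
  ultimately show ?thesis using assms by (simp add: ln_mult)
qed

lemma powr_neg_diff_ge:
  fixes x y p :: real
  assumes "0 < x" "x \<le> y" "0 < p"
  shows "p * y powr (-p-1) * (y - x) \<le> x powr (-p) - y powr (-p)"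
proof -
  define t where "t = x / y"
  have y: "0 < y" and t: "0 < t" and x: "x = t * y" using assms by (auto simp: t_def)
  have "1 - p * ln t \<le> t powr (-p)"
    using exp_ge_add_one_self[of "-p * ln t"] t by (simp add: powr_def)
  moreover have "p * ln t \<le> p * (t - 1)" using ln_le_minus_one[OF t] assms(3) by simp
  ultimately have "1 + p * (1 - t) \<le> t powr (-p)" by (simp add: algebra_simps)
  then have "(1 + p * (1 - t)) * y powr (-p) \<le> x powr (-p)"
    using x t y by (simp add: powr_mult mult_right_mono)
  moreover have "y powr (-p-1) = y powr (-p) / y" using y by (simp add: powr_diff)
  ultimately show ?thesis using x y by (simp add: field_simps)
qed

lemma ln_add_ln_diff_le:
  fixes L a :: real
  assumes "1 \<le> L" "a < 1"
  shows "ln (L + ln L) - ln L \<le> L powr (-a) / (1 - a)"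
proof -
  have L: "0 < L" "0 \<le> ln L" using assms by auto
  have "ln (L + ln L) - ln L = ln ((L + ln L) / L)" using L add_pos_nonneg[OF L] by (simp add: ln_div)
  also have "\<dots> \<le> ln L / L" using ln_le_minus_one[of "(L + ln L) / L"] L by (simp add: field_simps)
  also have "\<dots> \<le> (L powr (1 - a) / (1 - a)) / L"
    using ln_powr_bound[of L "1 - a"] assms L by (intro divide_right_mono) auto
  also have "\<dots> = L powr (-a) / (1 - a)" using L powr_add[of L 1 "-a"] by simp
  finally show ?thesis .
qed

lemma summable_le_double_step_diff:
  fixes m g :: "nat \<Rightarrow> real"
  assumes "\<And>j. 0 \<le> m j" "\<And>j. m j \<le> K * (g (Suc (Suc j)) - g j)" "\<And>j. \<bar>g j\<bar> \<le> B"
  shows "summable m"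
proof (rule summableI_nonneg_bounded)
  fix n
  have telescope: "(\<Sum>j<n. g (Suc (Suc j)) - g j) = g n + g (Suc n) - g 0 - g 1"
    by (induction n) auto
  have "(\<Sum>j<n. m j) \<le> K * (g n + g (Suc n) - g 0 - g 1)"
    using sum_mono[of "{..<n}" m "\<lambda>j. K * (g (Suc (Suc j)) - g j)"] assms(2)
    by (simp add: sum_distrib_left[symmetric] telescope)
  also have "\<dots> \<le> \<bar>K\<bar> * \<bar>g n + g (Suc n) - g 0 - g 1\<bar>"
    by (metis abs_ge_self abs_mult)
  also have "\<dots> \<le> \<bar>K\<bar> * (4 * B)"
    using assms(3)[of n] assms(3)[of "Suc n"] assms(3)[of 0] assms(3)[of 1]
    by (intro mult_left_mono) auto
  finally show "(\<Sum>j<n. m j) \<le> \<bar>K\<bar> * (4 * B)" .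
qed (rule assms(1))

lemma powr_neg_jump_ge:
  fixes v w M e p :: real
  assumes "1 \<le> v" "v \<le> w" "w \<le> M" "e \<le> w - v" "0 < p" "0 \<le> e"
  shows "p * M powr (-p-1) * e \<le> v powr (-p) - w powr (-p)"
proof -
  have "p * M powr (-p-1) * e \<le> p * w powr (-p-1) * (w - v)"
    using assms by (intro mult_mono mult_left_mono powr_mono2') auto
  also have "\<dots> \<le> v powr (-p) - w powr (-p)"
    using assms by (intro powr_neg_diff_ge) auto
  finally show ?thesis .
qed

lemma log_orbit_step_le_powr_drop:
  fixes v w C \<sigma> dd \<epsilon> p :: real
  assumes v: "1 \<le> v" "v \<le> w" and w: "w \<le> C * log_orbit (Suc (Suc j)) powr \<sigma>"
    and jump: "\<epsilon> * log_orbit j powr (-dd) \<le> w - v"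
    and "0 \<le> \<sigma>" "0 < \<epsilon>" "0 < p" and exponent: "\<sigma> * (p + 1) + dd < 1"
  shows "ln (log_orbit (Suc j)) - ln (log_orbit j)
           \<le> (v powr (-p) - w powr (-p))
               / ((1 - (\<sigma> * (p + 1) + dd)) * (p * \<epsilon> * (4 powr \<sigma> * C) powr (-p-1)))"
proof -
  define L where "L = log_orbit j"
  define a where "a = \<sigma> * (p + 1) + dd"
  define C' where "C' = 4 powr \<sigma> * C"
  define c where "c = p * \<epsilon> * C' powr (-p-1)"
  have L: "2 \<le> L" by (simp add: L_def log_orbit_ge_2)
  have "log_orbit (Suc (Suc j)) \<le> 4 * L"
    using log_orbit_Suc_le_double[of j] log_orbit_Suc_le_double[of "Suc j"] by (simp add: L_def)
  then have "log_orbit (Suc (Suc j)) powr \<sigma> \<le> 4 powr \<sigma> * L powr \<sigma>"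
    using assms log_orbit_ge_2[of "Suc (Suc j)"] by (simp add: powr_mult[symmetric] powr_mono2)
  moreover have "0 < C * log_orbit (Suc (Suc j)) powr \<sigma>" using v w by linarith
  then have "0 < C" using log_orbit_ge_2[of "Suc (Suc j)"] by (simp add: zero_less_mult_iff)
  ultimately have "C * log_orbit (Suc (Suc j)) powr \<sigma> \<le> C' * L powr \<sigma>"
    by (simp add: C'_def mult.assoc mult.left_commute[of C])
  then have "p * (C' * L powr \<sigma>) powr (-p-1) * (\<epsilon> * L powr (-dd)) \<le> v powr (-p) - w powr (-p)"
    using assms by (intro powr_neg_jump_ge) (auto simp: L_def)
  moreover have "(C' * L powr \<sigma>) powr (-p-1) * L powr (-dd) = C' powr (-p-1) * L powr (-a)"
  proof -
    have "-a = \<sigma> * (-p-1) + (-dd)" by (simp add: a_def algebra_simps)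
    then show ?thesis
      using L \<open>0 < C\<close> by (simp only: C'_def powr_mult powr_powr powr_add powr_gt_zero less_imp_le mult.assoc)
  qed
  ultimately have drop: "c * L powr (-a) \<le> v powr (-p) - w powr (-p)"
    by (simp add: c_def algebra_simps)
  have "0 < c" using assms \<open>0 < C\<close> by (simp add: c_def C'_def)
  have "0 < 1 - a" using exponent by (simp add: a_def)
  have "ln (log_orbit (Suc j)) - ln (log_orbit j) = ln (L + ln L) - ln L"
    by (simp add: L_def log_orbit.simps(2))
  also have "\<dots> \<le> L powr (-a) / (1 - a)" using L \<open>0 < 1 - a\<close> by (intro ln_add_ln_diff_le) auto
  also have "\<dots> = c * L powr (-a) / ((1 - a) * c)" using \<open>0 < c\<close> by simp
  also have "\<dots> \<le> (v powr (-p) - w powr (-p)) / ((1 - a) * c)"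
    using drop \<open>0 < c\<close> \<open>0 < 1 - a\<close> by (intro divide_right_mono) auto
  finally show ?thesis by (simp add: a_def c_def C'_def)
qed

lemma summable_orbit_jumps:
  fixes V :: "nat \<Rightarrow> real" and C \<sigma> dd \<epsilon> :: real
  assumes mono: "\<And>i k. J \<le> i \<Longrightarrow> i \<le> k \<Longrightarrow> V i \<le> V k"
    and ge_1: "\<And>j. J \<le> j \<Longrightarrow> 1 \<le> V j"
    and growth: "\<And>j. J \<le> j \<Longrightarrow> V j \<le> C * log_orbit j powr \<sigma>"
    and "0 \<le> \<sigma>" "0 < \<epsilon>" "\<sigma> + dd < 1"
  shows "summable (\<lambda>j. if J \<le> j \<and> \<epsilon> * log_orbit j powr (-dd) \<le> V (Suc (Suc j)) - V j
                        then ln (log_orbit (Suc j)) - ln (log_orbit j) else 0)"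
    (is "summable ?m")
proof -
  define p where "p = (1 - \<sigma> - dd) / (2 * (\<sigma> + 1))"
  define D where "D = (1 - (\<sigma> * (p + 1) + dd)) * (p * \<epsilon> * (4 powr \<sigma> * C) powr (-p-1))"
  define g where "g j = - (V (max j J) powr (-p))" for j
  have p: "0 < p" using assms by (simp add: p_def)
  have "\<sigma> * p = \<sigma> / (\<sigma> + 1) * ((1 - \<sigma> - dd) / 2)" by (simp add: p_def)
  also have "\<dots> \<le> 1 * ((1 - \<sigma> - dd) / 2)" using assms by (intro mult_right_mono) auto
  finally have "\<sigma> * p \<le> (1 - \<sigma> - dd) / 2" by simp
  then have exponent: "\<sigma> * (p + 1) + dd < 1" using \<open>\<sigma> + dd < 1\<close> by argo
  have "0 < C * log_orbit J powr \<sigma>" using ge_1[of J] growth[of J] by linarith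
  then have "0 < C" using log_orbit_ge_2[of J] by (simp add: zero_less_mult_iff)
  then have D: "0 < D" using exponent p assms by (simp add: D_def)
  have g_mono: "g j \<le> g k" if "j \<le> k" for j k
    using mono[of "max j J" "max k J"] ge_1[of "max j J"] that p by (auto simp: g_def intro!: powr_mono2')
  show ?thesis
  proof (rule summable_le_double_step_diff[where K = "1 / D"])
    show "0 \<le> ?m j" for j
      using log_orbit_less_Suc[of j] log_orbit_ge_2[of j] by (simp add: ln_mono)
    show "\<bar>g j\<bar> \<le> 1" for j
      using powr_mono2'[of "-p" 1 "V (max j J)"] ge_1[of "max j J"] p by (simp add: g_def)
    show "?m j \<le> 1 / D * (g (Suc (Suc j)) - g j)" for j
    proof (cases "J \<le> j \<and> \<epsilon> * log_orbit j powr (-dd) \<le> V (Suc (Suc j)) - V j")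
      case False
      then show ?thesis using g_mono[of j "Suc (Suc j)"] D by auto
    next
      case True
      then have "?m j = ln (log_orbit (Suc j)) - ln (log_orbit j)" by simp
      also have "\<dots> \<le> (V j powr (-p) - V (Suc (Suc j)) powr (-p)) / D"
        unfolding D_def using True ge_1 mono[of j "Suc (Suc j)"] growth[of "Suc (Suc j)"] p exponent assms
        by (intro log_orbit_step_le_powr_drop) auto
      finally show ?thesis using True by (simp add: g_def max_absorb1)
    qed
  qed
qed

definition loglog_measure :: "real measure" where
  "loglog_measure = density lborel (\<lambda>t. ennreal (1 / (t * ln t)))"

lemma sets_loglog_measure [simp, measurable_cong]: "sets loglog_measure = sets borel"
  by (simp add: loglog_measure_def)

lemma emeasure_loglog_measure:
  "A \<in> sets borel \<Longrightarrow>
    emeasure loglog_measure A = (\<integral>\<^sup>+ t. indicator A t * ennreal (1 / (t * ln t)) \<partial>lborel)"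
  unfolding loglog_measure_def by (subst emeasure_density) (auto simp: mult.commute)

lemma emeasure_loglog_measure_Icc:
  assumes "1 < a" "a \<le> b"
  shows "emeasure loglog_measure {a..b} = ennreal (ln (ln b) - ln (ln a))"
  unfolding loglog_measure_def
proof (subst emeasure_density, measurable, rule nn_integral_FTC_Icc)
  fix x assume "x \<in> {a..b}"
  then have "1 < x" using assms by auto
  then show "((\<lambda>x. ln (ln x)) has_real_derivative 1 / (x * ln x)) (at x)" "0 \<le> 1 / (x * ln x)"
    by (auto intro!: derivative_eq_intros simp: field_simps)
qed (use assms in auto)

lemma emeasure_loglog_measure_UN_Icc_finite:
  fixes a :: "nat \<Rightarrow> real" and B :: "nat set"
  assumes "\<And>j. 1 < a j" "\<And>j. a j \<le> a (Suc j)"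
    and "summable (\<lambda>j. if j \<in> B then ln (ln (a (Suc j))) - ln (ln (a j)) else 0)" (is "summable ?m")
  shows "emeasure loglog_measure (\<Union>j\<in>B. {a j..a (Suc j)}) < \<infinity>"
proof -
  define X where "X j = (if j \<in> B then {a j..a (Suc j)} else {})" for j
  have m_nonneg: "0 \<le> ?m j" for j
    using assms(1)[of j] assms(2)[of j] by (auto intro!: ln_mono)
  have "(\<Union>j\<in>B. {a j..a (Suc j)}) = (\<Union>j. X j)" by (auto simp: X_def split: if_splits)
  then have "emeasure loglog_measure (\<Union>j\<in>B. {a j..a (Suc j)}) = emeasure loglog_measure (\<Union>j. X j)"
    by simp
  also have "\<dots> \<le> (\<Sum>j. emeasure loglog_measure (X j))"
    by (rule emeasure_subadditive_countably) (auto simp: X_def)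
  also have "\<dots> = (\<Sum>j. ennreal (?m j))"
    using assms(1,2) by (intro suminf_cong) (simp add: X_def emeasure_loglog_measure_Icc)
  also have "\<dots> = ennreal (\<Sum>j. ?m j)" using m_nonneg assms(3) by (rule suminf_ennreal2)
  finally show ?thesis using order_le_less_trans by fastforce
qed

lemma le_exp_logplus: "u \<le> exp (logplus u)"
proof (cases "0 < u")
  case True
  then have "u = exp (ln u)" by simp
  also have "\<dots> \<le> exp (logplus u)" by (simp add: logplus_def)
  finally show ?thesis .
qed (use exp_gt_zero[of "logplus u"] in linarith)

lemma Limsup_loglog_order_nonneg:
  "0 \<le> Limsup at_top (\<lambda>r. ereal (logplus (logplus (T r)) / ln (ln r)))"
proof (rule le_Limsup)
  have "\<forall>\<^sub>F r in at_top. exp 1 \<le> (r::real)" by (rule eventually_ge_at_top)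
  then show "\<forall>\<^sub>F r in at_top. 0 \<le> ereal (logplus (logplus (T r)) / ln (ln r))"
  proof (elim eventually_mono)
    fix r :: real assume "exp 1 \<le> r"
    then have "1 \<le> ln r" using ln_mono[of "exp 1" r] by simp
    then show "0 \<le> ereal (logplus (logplus (T r)) / ln (ln r))" by (simp add: logplus_def)
  qed
qed simp

lemma eventually_ln_le_ln_powr_of_Limsup:
  assumes "Limsup at_top (\<lambda>r. ereal (logplus (logplus (T r)) / ln (ln r))) < ereal \<sigma>"
  shows "\<forall>\<^sub>F r in at_top. ln (T r) \<le> ln r powr \<sigma>"
  using Limsup_lessD[OF assms] eventually_ge_at_top[of "exp 2"]
proof eventually_elim
  case (elim r)
  then have "2 \<le> ln r" using ln_mono[of "exp 2" r] by simp
  then have loglog: "logplus (logplus (T r)) \<le> \<sigma> * ln (ln r)" using elim(1) by (simp add: field_simps)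
  have "ln (T r) \<le> logplus (T r)" by (simp add: logplus_def)
  also have "\<dots> \<le> exp (logplus (logplus (T r)))" by (rule le_exp_logplus)
  also have "\<dots> \<le> exp (\<sigma> * ln (ln r))" using loglog by simp
  also have "\<dots> = ln r powr \<sigma>" using \<open>2 \<le> ln r\<close> by (simp add: powr_def)
  finally show ?case .
qed

lemma loglog_order_exponents:
  fixes T :: "real \<Rightarrow> real" and \<delta> :: real
  assumes "ereal \<delta> < 1 - Limsup at_top (\<lambda>r. ereal (logplus (logplus (T r)) / ln (ln r)))"
  obtains \<sigma> dd where "Limsup at_top (\<lambda>r. ereal (logplus (logplus (T r)) / ln (ln r))) < ereal \<sigma>"
    "0 \<le> \<sigma>" "\<delta> < dd" "\<sigma> + dd < 1"
proof -
  define S where "S = Limsup at_top (\<lambda>r. ereal (logplus (logplus (T r)) / ln (ln r)))"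
  have "0 \<le> S" unfolding S_def by (rule Limsup_loglog_order_nonneg)
  moreover have "ereal \<delta> < 1 - S" using assms by (simp add: S_def)
  ultimately have "S < ereal (1 - \<delta>)" by (cases S) (auto simp: one_ereal_def)
  then obtain s where "S < ereal s" "ereal s < ereal (1 - \<delta>)" using ereal_dense2 by blast
  moreover have "0 \<le> s"
    using \<open>0 \<le> S\<close> \<open>S < ereal s\<close> by (metis ereal_less_eq(3) order.trans less_imp_le zero_ereal_def)
  ultimately show ?thesis
    by (intro that[of s "(\<delta> + 1 - s) / 2"]) (auto simp: S_def field_simps)
qed

lemma shift_increment_le_on_orbit_cell:
  fixes T :: "real \<Rightarrow> real" and dd r :: real
  assumes mono: "mono_on {exp 1..} T" and nonneg: "0 \<le> T (exp (log_orbit j))"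
    and r: "exp (log_orbit j) \<le> r" "r \<le> exp (log_orbit (Suc j))"
    and good: "T (exp (log_orbit (Suc (Suc j)))) \<le> T (exp (log_orbit j)) * (1 + log_orbit j powr (-dd))"
    and "0 \<le> dd"
  shows "T r \<le> T (r * ln r)" "T (r * ln r) - T r \<le> T r * (ln r / 2) powr (-dd)"
proof -
  have e: "exp 1 \<le> exp (log_orbit j)" using log_orbit_ge_2[of j] by simp
  have r_pos: "0 < r" using r(1) exp_gt_zero by (rule order.strict_trans2[rotated])
  have ln_r: "log_orbit j \<le> ln r" "ln r \<le> log_orbit (Suc j)"
    using r r_pos by (metis exp_le_cancel_iff exp_ln)+
  then have "1 \<le> ln r" using log_orbit_ge_2[of j] by linarith
  then have r_le: "r \<le> r * ln r" using r_pos by simp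
  have "r * ln r \<le> exp (log_orbit (Suc j)) * log_orbit (Suc j)"
    using r ln_r \<open>1 \<le> ln r\<close> by (intro mult_mono) auto
  also have "\<dots> = exp (log_orbit (Suc (Suc j)))"
    using log_orbit_ge_2[of "Suc j"] by (simp add: log_orbit.simps(2)[of "Suc j"] exp_add)
  finally have rl_le: "r * ln r \<le> exp (log_orbit (Suc (Suc j)))" .
  have re: "exp 1 \<le> r" using e r(1) by linarith
  have T_Rj: "T (exp (log_orbit j)) \<le> T r" using e re r(1) by (intro mono_onD[OF mono]) auto
  show T_r: "T r \<le> T (r * ln r)" using re r_le by (intro mono_onD[OF mono]) auto
  have "log_orbit j powr (-dd) \<le> (ln r / 2) powr (-dd)"
    using ln_r log_orbit_Suc_le_double[of j] \<open>1 \<le> ln r\<close> \<open>0 \<le> dd\<close> by (intro powr_mono2') auto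
  moreover have "T (r * ln r) \<le> T (exp (log_orbit (Suc (Suc j))))"
    using re r_le rl_le log_orbit_ge_2[of "Suc (Suc j)"] by (intro mono_onD[OF mono]) auto
  ultimately show "T (r * ln r) - T r \<le> T r * (ln r / 2) powr (-dd)"
    using good T_Rj nonneg mult_mono[OF T_Rj, of "log_orbit j powr (-dd)" "(ln r / 2) powr (-dd)"]
    by (simp add: algebra_simps)
qed

lemma shift_increment_le_off_orbit_cells:
  fixes T :: "real \<Rightarrow> real" and B :: "nat set" and dd r :: real
  assumes mono: "mono_on {exp 1..} T" and nonneg: "\<And>j. J \<le> j \<Longrightarrow> 0 \<le> T (exp (log_orbit j))"
    and good: "\<And>j. J \<le> j \<Longrightarrow> j \<notin> B \<Longrightarrow>
      T (exp (log_orbit (Suc (Suc j)))) \<le> T (exp (log_orbit j)) * (1 + log_orbit j powr (-dd))"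
    and "0 \<le> dd"
    and r: "exp (log_orbit J) < r" "r \<notin> (\<Union>j\<in>B. {exp (log_orbit j)..exp (log_orbit (Suc j))})"
  shows "T r \<le> T (r * ln r) \<and> T (r * ln r) - T r \<le> T r * (ln r / 2) powr (-dd)"
proof -
  obtain j where "J \<le> j" and r_in: "exp (log_orbit j) \<le> r" "r \<le> exp (log_orbit (Suc j))"
    using r(1) by (rule exp_log_orbit_cell)
  then have "j \<notin> B" using r(2) by auto
  with \<open>J \<le> j\<close> show ?thesis
    using shift_increment_le_on_orbit_cell[OF mono nonneg r_in good] \<open>0 \<le> dd\<close> by simp
qed

lemma summable_orbit_steps_with_large_increase:
  fixes T :: "real \<Rightarrow> real" and \<sigma> dd :: real
  assumes mono: "mono_on {exp 1..} T" and pos: "0 < T (exp (log_orbit J))"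
    and growth: "\<And>j. J \<le> j \<Longrightarrow> ln (T (exp (log_orbit j))) \<le> log_orbit j powr \<sigma>"
    and "0 \<le> \<sigma>" "0 < dd" "\<sigma> + dd < 1"
  shows "summable (\<lambda>j. if J \<le> j \<and> T (exp (log_orbit j)) * (1 + log_orbit j powr (-dd))
                           < T (exp (log_orbit (Suc (Suc j))))
                        then ln (log_orbit (Suc j)) - ln (log_orbit j) else 0)"
proof -
  define R where "R j = exp (log_orbit j)" for j
  define V where "V j = ln (T (R j)) - ln (T (R J)) + 1" for j
  have T_mono: "T (R i) \<le> T (R k)" if "i \<le> k" for i k
    using log_orbit_ge_2[of i] log_orbit_mono[OF that]
    by (intro mono_onD[OF mono]) (auto simp: R_def)
  have T_pos: "0 < T (R j)" if "J \<le> j" for j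
    using pos T_mono[OF that] by (simp add: R_def)
  have V_mono: "V i \<le> V k" if "J \<le> i" "i \<le> k" for i k
    using T_mono[OF that(2)] T_pos[OF that(1)] by (simp add: V_def)
  have V_ge_1: "1 \<le> V j" if "J \<le> j" for j
    using V_mono[OF order.refl that] by (simp add: V_def)
  have V_growth: "V j \<le> (1 + \<bar>1 - ln (T (R J))\<bar>) * log_orbit j powr \<sigma>" if "J \<le> j" for j
  proof -
    have "1 \<le> log_orbit j powr \<sigma>" using log_orbit_ge_2[of j] assms by (simp add: ge_one_powr_ge_zero)
    have "V j \<le> log_orbit j powr \<sigma> + \<bar>1 - ln (T (R J))\<bar>"
      using growth[OF that] by (simp add: V_def R_def)
    also have "\<dots> \<le> log_orbit j powr \<sigma> + \<bar>1 - ln (T (R J))\<bar> * log_orbit j powr \<sigma>"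
      using mult_left_mono[OF \<open>1 \<le> log_orbit j powr \<sigma>\<close>, of "\<bar>1 - ln (T (R J))\<bar>"] by simp
    finally show ?thesis by (simp add: algebra_simps)
  qed
  have V_jump: "1/2 * log_orbit j powr (-dd) \<le> V (Suc (Suc j)) - V j"
    if "J \<le> j" "T (R j) * (1 + log_orbit j powr (-dd)) < T (R (Suc (Suc j)))" for j
  proof -
    have "log_orbit j powr (-dd) \<le> log_orbit j powr 0"
      using log_orbit_ge_2[of j] assms by (intro powr_mono) auto
    then have "log_orbit j powr (-dd) / 2 \<le> ln (T (R (Suc (Suc j)))) - ln (T (R j))"
      using that T_pos[OF that(1)] log_orbit_ge_2[of j] by (intro ln_ratio_ge_half) auto
    then show ?thesis by (simp add: V_def)
  qed
  have summable_V: "summable (\<lambda>j. if J \<le> j \<and> 1/2 * log_orbit j powr (-dd) \<le> V (Suc (Suc j)) - V j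
                      then ln (log_orbit (Suc j)) - ln (log_orbit j) else 0)"
    using V_mono V_ge_1 V_growth assms by (intro summable_orbit_jumps) auto
  have orbit_ln_step_nonneg: "0 \<le> ln (log_orbit (Suc j)) - ln (log_orbit j)" for j
    using log_orbit_less_Suc[of j] log_orbit_ge_2[of j] by (simp add: ln_mono)
  show ?thesis
    using summable_V by (rule summable_comparison_test'[where N = 0])
      (use V_jump orbit_ln_step_nonneg in \<open>auto simp: R_def\<close>)
qed

lemma orbit_shift_bound_off_exceptional_set:
  fixes T :: "real \<Rightarrow> real" and \<sigma> dd r0 :: real
  assumes mono: "mono_on {exp 1..} T" and r0: "exp 1 \<le> r0" "0 < T r0"
    and growth: "\<forall>\<^sub>F r in at_top. ln (T r) \<le> ln r powr \<sigma>"
    and "0 \<le> \<sigma>" "0 < dd" "\<sigma> + dd < 1"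
  obtains F where "F \<subseteq> {exp 1..}" "F \<in> sets borel" "emeasure loglog_measure F < \<infinity>"
    "\<forall>\<^sub>F r in inf at_top (principal (- F)).
       T r \<le> T (r * ln r) \<and> T (r * ln r) - T r \<le> T r * (ln r / 2) powr (-dd)"
proof -
  define R where "R j = exp (log_orbit j)" for j
  have "\<forall>\<^sub>F r in at_top. r0 \<le> r \<and> ln (T r) \<le> ln r powr \<sigma>"
    using eventually_ge_at_top[of r0] growth by (rule eventually_conj)
  then have "\<forall>\<^sub>F j in sequentially. r0 \<le> R j \<and> ln (T (R j)) \<le> ln (R j) powr \<sigma>"
    unfolding R_def using filterlim_exp_log_orbit by (rule eventually_compose_filterlim)
  then obtain J where J: "\<And>j. J \<le> j \<Longrightarrow> r0 \<le> R j \<and> ln (T (R j)) \<le> log_orbit j powr \<sigma>"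
    by (auto simp: eventually_sequentially R_def)
  have R_ge: "exp 1 \<le> R j" for j using log_orbit_ge_2[of j] by (simp add: R_def)
  have T_R_pos: "0 < T (R j)" if "J \<le> j" for j
    using r0 J[OF that] mono_onD[OF mono, of r0 "R j"] by simp
  define B where "B = {j. J \<le> j \<and> T (R j) * (1 + log_orbit j powr (-dd)) < T (R (Suc (Suc j)))}"
  have good: "T (exp (log_orbit (Suc (Suc j)))) \<le> T (exp (log_orbit j)) * (1 + log_orbit j powr (-dd))"
    if "J \<le> j" "j \<notin> B" for j
    using that by (simp add: B_def R_def not_less)
  define F where "F = {exp 1..R J} \<union> (\<Union>j\<in>B. {R j..R (Suc j)})"
  have "emeasure loglog_measure (\<Union>j\<in>B. {R j..R (Suc j)}) < \<infinity>"
  proof (rule emeasure_loglog_measure_UN_Icc_finite)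
    show "1 < R j" "R j \<le> R (Suc j)" for j
      using R_ge[of j] log_orbit_less_Suc[of j] by (auto simp: R_def)
    have "0 < T (R J)" by (rule T_R_pos) simp
    with J show "summable (\<lambda>j. if j \<in> B then ln (ln (R (Suc j))) - ln (ln (R j)) else 0)"
      using summable_orbit_steps_with_large_increase[OF mono, of J \<sigma> dd] assms
      by (simp add: R_def B_def cong: if_cong)
  qed
  moreover have "emeasure loglog_measure F
      \<le> emeasure loglog_measure {exp 1..R J} + emeasure loglog_measure (\<Union>j\<in>B. {R j..R (Suc j)})"
    unfolding F_def by (rule emeasure_subadditive) auto
  ultimately have F_finite: "emeasure loglog_measure F < \<infinity>"
    using R_ge[of J] by (simp add: emeasure_loglog_measure_Icc less_top order_le_less_trans)
  have "\<forall>\<^sub>F r in at_top. r \<in> - F \<longrightarrow>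
          T r \<le> T (r * ln r) \<and> T (r * ln r) - T r \<le> T r * (ln r / 2) powr (-dd)"
    using eventually_ge_at_top[of "exp 1"]
  proof eventually_elim
    case (elim r)
    show ?case
    proof
      assume "r \<in> - F"
      with elim have "R J < r" "r \<notin> (\<Union>j\<in>B. {R j..R (Suc j)})" by (auto simp: F_def)
      then show "T r \<le> T (r * ln r) \<and> T (r * ln r) - T r \<le> T r * (ln r / 2) powr (-dd)"
        unfolding R_def using T_R_pos good \<open>0 < dd\<close>
        by (intro shift_increment_le_off_orbit_cells[OF mono, of J B]) (auto simp: R_def less_imp_le)
    qed
  qed
  moreover have "F \<subseteq> {exp 1..}" using R_ge by (force simp: F_def intro: order_trans)
  moreover have "F \<in> sets borel" unfolding F_def by (intro sets.Un sets.countable_UN') auto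
  ultimately show ?thesis using F_finite that by (simp add: eventually_inf_principal)
qed

lemma smallo_shift_of_vanishing:
  fixes T g :: "real \<Rightarrow> real"
  assumes "\<And>r. exp 1 \<le> r \<Longrightarrow> T r = 0"
  shows "(\<lambda>r. T (r * ln r) - T r) \<in> o[at_top](g)"
proof -
  have shift_zero: "\<forall>\<^sub>F r in at_top. T (r * ln r) - T r = 0"
    using eventually_ge_at_top[of "exp 1"]
  proof eventually_elim
    case (elim r)
    then have "1 \<le> ln r" using ln_mono[of "exp 1" r] by simp
    moreover have "0 < r" using elim exp_gt_zero[of 1] by linarith
    ultimately have "r \<le> r * ln r" by simp
    then show ?case using assms[of r] assms[of "r * ln r"] elim by simp
  qed
  show ?thesis by (subst landau_o.small.in_cong[OF shift_zero]) simp
qed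

lemma smallo_shift_of_bound:
  fixes T :: "real \<Rightarrow> real" and G :: "real filter" and \<delta> dd :: real
  assumes G: "G \<le> at_top" and nonneg: "\<And>r. exp 1 \<le> r \<Longrightarrow> 0 \<le> T r" and "\<delta> < dd"
    and bound: "\<forall>\<^sub>F r in G. T r \<le> T (r * ln r) \<and> T (r * ln r) - T r \<le> T r * (ln r / 2) powr (-dd)"
  shows "(\<lambda>r. T (r * ln r) - T r) \<in> o[G](\<lambda>r. T r / ln r powr \<delta>)"
proof -
  have "(\<lambda>r. T (r * ln r) - T r) \<in> O[G](\<lambda>r. T r * (ln r / 2) powr (-dd))"
  proof (rule landau_o.bigI[of 1])
    show "\<forall>\<^sub>F r in G. norm (T (r * ln r) - T r) \<le> 1 * norm (T r * (ln r / 2) powr (-dd))"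
      using bound filter_leD[OF G eventually_ge_at_top[of "exp 1"]]
      by eventually_elim (simp add: nonneg)
  qed simp
  also have "(\<lambda>r. T r * (ln r / 2) powr (-dd)) \<in> o[G](\<lambda>r. T r * (1 / ln r powr \<delta>))"
  proof (intro landau_o.small.mult_left landau_o.small.filter_mono[OF G])
    show "(\<lambda>r. (ln r / 2) powr (-dd)) \<in> o(\<lambda>r. 1 / ln r powr \<delta>)"
      using \<open>\<delta> < dd\<close> by real_asymp
  qed
  finally show ?thesis by simp
qed

theorem lemma3p1:
  fixes T :: "real \<Rightarrow> real" and \<delta> :: real
  assumes mono: "mono_on {exp 1..} T"
    and cont: "continuous_on {exp 1..} T"
    and nonneg: "\<And>r. r \<ge> exp 1 \<Longrightarrow> T r \<ge> 0"
    and order: "Limsup at_top (\<lambda>r. ereal (logplus (logplus (T r)) / ln (ln r))) < 1"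
    and delta_pos: "0 < \<delta>"
    and delta_lt: "ereal \<delta> < 1 - Limsup at_top (\<lambda>r. ereal (logplus (logplus (T r)) / ln (ln r)))"
  shows "\<exists>F. F \<subseteq> {exp 1..} \<and> F \<in> sets borel \<and>
           (\<integral>\<^sup>+ t. indicator F t * ennreal (1 / (t * ln t)) \<partial>lborel) < \<infinity> \<and>
           (\<lambda>r. T (r * ln r) - T r) \<in> smallo (inf at_top (principal (- F))) (\<lambda>r. T r / (ln r) powr \<delta>)"
proof (cases "\<exists>r0 \<ge> exp 1. 0 < T r0")
  case False
  then have "T r = 0" if "exp 1 \<le> r" for r using nonneg[OF that] that by (meson not_less order.antisym)
  then show ?thesis by (intro exI[of _ "{}"]) (simp add: smallo_shift_of_vanishing)
next
  case True
  then obtain r0 where r0: "exp 1 \<le> r0" "0 < T r0" by blast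
  obtain \<sigma> dd where \<sigma>: "Limsup at_top (\<lambda>r. ereal (logplus (logplus (T r)) / ln (ln r))) < ereal \<sigma>"
    and exps: "0 \<le> \<sigma>" "\<delta> < dd" "\<sigma> + dd < 1"
    using loglog_order_exponents[OF delta_lt] by blast
  have "0 < dd" using delta_pos exps(2) by linarith
  then obtain F where F: "F \<subseteq> {exp 1..}" "F \<in> sets borel" "emeasure loglog_measure F < \<infinity>"
    and bound: "\<forall>\<^sub>F r in inf at_top (principal (- F)).
       T r \<le> T (r * ln r) \<and> T (r * ln r) - T r \<le> T r * (ln r / 2) powr (-dd)"
    by (rule orbit_shift_bound_off_exceptional_set[OF mono r0
        eventually_ln_le_ln_powr_of_Limsup[OF \<sigma>] exps(1) _ exps(3)])
  have "(\<lambda>r. T (r * ln r) - T r) \<in> o[inf at_top (principal (- F))](\<lambda>r. T r / ln r powr \<delta>)"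
    using nonneg exps(2) bound by (intro smallo_shift_of_bound) auto
  with F show ?thesis by (intro exI[of _ F]) (simp add: emeasure_loglog_measure)
qed

end
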